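(* In the synchronous unauthenticated setting with $n$ parties of which at most $t=\lfloor (n-1)/3\rfloor$ are Byzantine and a computationally unbounded adversary, the protocol "Synchronous Error-free $\frac{n}{3}$-BA" described in the context, run on $l$-bit inputs, satisfies Termination, Agreement and Validity of Byzantine agreement (with probability $1$), and has communication complexity $O(nl+n^3+n\mathcal{B}(1))$.
   Context: Model: $n$ parties connected pairwise by reliable authenticated (point-to-point) channels, synchronous; a static, computationally unbounded adversary corrupts up to $t$ parties (Byzantine). No cryptography is used. Communication complexity = worst-case total bits sent by honest parties. Byzantine agreement: each $P_i$ holds an $l$-bit input $m_i$; Termination: every honest party outputs; Agreement: honest outputs equal; Validity: if all honest inputs equal $m$, honest parties output $m$. A single-bit Byzantine broadcast oracle lets a sender broadcast one bit so that all honest parties deliver the same bit, equal to the sender's if the sender is honest; its cost is $\mathcal{B}(1)$. Reed–Solomon $(n,t+1)$ code: $\texttt{ENC}$ maps $t+1$ data symbols to $n$ codeword symbols, any $t+1$ of which determine the data; $\texttt{DEC}$ corrects $c$ errors and $d$ erasures iff $n-(t+1)\ge 2c+d$. $(n,t)$-star of an undirected graph $G$ on vertex set $\mathcal{P}=\{P_1,\dots,P_n\}$: a pair $(\mathcal{C},\mathcal{D})$ with $\mathcal{C}\subseteq\mathcal{D}\subseteq\mathcal{P}$, $|\mathcal{C}|\ge n-2t$, $|\mathcal{D}|\ge n-t$, and every $P_i\in\mathcal{C}$, $P_j\in\mathcal{D}$ adjacent. Procedure $\texttt{STAR}(G)$: let $H$ be the complement of $G$ with edge set $\bar E$; compute a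 maximum matching $M$ of $H$ by a fixed deterministic algorithm; $N$ = matched vertices, $\bar N=\mathcal{P}\setminus N$; $T=\{P_i\in\bar N:\exists (P_j,P_k)\in M,\ (P_i,P_j),(P_i,P_k)\in\bar E\}$; $\mathcal{C}=\bar N\setminus T$; $B=\{P_j\in N:\exists P_k\in\mathcal{C},\ (P_j,P_k)\in\bar E\}$; $\mathcal{D}=\mathcal{P}\setminus B$; output $(\mathcal{C},\mathcal{D})$ if $|\mathcal{C}|\ge n-2t$ and $|\mathcal{D}|\ge n-t$, else output noSTAR. Protocol for $P_i$: (1) Split $m_i$ into $t+1$ blocks of $l/(t+1)$ bits, compute $(s_{i1},\dots,s_{in})=\texttt{ENC}(\text{blocks})$; send $s_{ii}$ to every party and $s_{ij}$ to $P_j$ for each $j$. (2) Form a bit vector $v_i$ of length $n$ with $v_i[j]=1$ iff $s_{ij}=s_{jj}$ and $s_{ii}=s_{ji}$, where $s_{jj}$ and $s_{ji}$ are the values received from $P_j$ in step 1; send $v_i$ to every party. (3) Build graph $G_i$ on $\mathcal{P}$ with edge $(P_x,P_y)$ iff $v_x[y]=v_y[x]=1$ (using the vectors as received by $P_i$), and run $\texttt{STAR}(G_i)$. (4) If it returns $(\mathcal{C}_i,\mathcal{D}_i)$, let $\mathcal{F}_i$ be the set of parties with at least $t+1$ neighbours in $\mathcal{C}_i$ and $\mathcal{E}_i$ the set of parties with at least $2t+1$ neighbours in $\mathcal{F}_i$ (each party counted as its own neighbour); if $|\mathcal{F}_i|\ge 2t+1$ and $|\mathcal{E}_i|\ge 2t+1$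 keep $\mathcal{E}_i$, otherwise (or if noSTAR) set $\mathcal{E}_i=\emptyset$. (5) If $\mathcal{E}_i\ne\emptyset$, broadcast bit $1$ with the single-bit BB oracle and send $\mathcal{E}_i$ as an $n$-bit vector to every party; otherwise broadcast bit $0$. (6) If at least $2t+1$ of these broadcasts deliver $1$: let $\mathbf{E}$ be the sets $\mathcal{E}_x$ received; for each $\mathcal{E}_x\in\mathbf{E}$ let $maj_x$ be a value $v$ with $|\{j\in\mathcal{E}_x: s_{ji}=v\}|\ge\lceil(|\mathcal{E}_x|+1)/2\rceil$ ($s_{ji}$ = value received from $P_j$ in step 1), or $\bot$ if none; find $\mathbf{E}'\subseteq\mathbf{E}$ with $|\mathbf{E}'|\ge t+1$ whose $maj_x$ are all equal to a common value $maj\ne\bot$, and send $maj$ to every party. If fewer than $2t+1$ broadcasts deliver $1$, output a predefined $l$-bit message $m'$ and abort. (7) With $maj_j$ the value received from $P_j$ in step 6, apply $\texttt{DEC}$ to $(maj_1,\dots,maj_n)$ with $c=t$, $d=0$ and output the concatenation of the decoded blocks. *)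

theory Defs
  imports Main "HOL-Computational_Algebra.Primes"
begin

text \<open>Parties are P_0,...,P_(n-1), identified with the naturals below n.\<close>

definition tB :: "nat \<Rightarrow> nat" where
  "tB n = (n - 1) div 3"

text \<open>Block length: ceiling of l/(t+1) (the message is padded with zeros).\<close>
definition blk :: "nat \<Rightarrow> nat \<Rightarrow> nat" where
  "blk n l = (l + tB n) div (tB n + 1)"

text \<open>The Reed-Solomon code is over the prime field GF(p), p the least prime with
  n < p (so that 1..n are distinct evaluation points) and 2^blk <= p (so that a block fits).\<close>
definition prime_of :: "nat \<Rightarrow> nat \<Rightarrow> nat" where
  "prime_of n l = (LEAST p. prime p \<and> n < p \<and> 2 ^ blk n l \<le> p)"

text \<open>Number of bits needed to transmit one field symbol.\<close>
definition symbits :: "nat \<Rightarrow> nat" where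
  "symbits p = (LEAST k. p \<le> 2 ^ k)"

definition bits_to_nat :: "bool list \<Rightarrow> nat" where
  "bits_to_nat bs = foldr (\<lambda>b acc. (if b then 1 else 0) + 2 * acc) bs 0"

definition nat_to_bits :: "nat \<Rightarrow> nat \<Rightarrow> bool list" where
  "nat_to_bits w x = map (\<lambda>i. odd (x div 2 ^ i)) [0..<w]"

definition msg_blocks :: "nat \<Rightarrow> nat \<Rightarrow> bool list \<Rightarrow> nat list" where
  "msg_blocks n l msg =
     map (\<lambda>k. bits_to_nat (take (blk n l) (drop (k * blk n l) msg))) [0..<tB n + 1]"

definition unblocks :: "nat \<Rightarrow> nat \<Rightarrow> nat list \<Rightarrow> bool list" where
  "unblocks n l ds = take l (concat (map (nat_to_bits (blk n l)) ds))"

section \<open>Reed-Solomon (n, t+1) code over GF(p), evaluation points 1..n\<close>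

definition rs_enc :: "nat \<Rightarrow> nat list \<Rightarrow> nat \<Rightarrow> nat" where
  "rs_enc p ds j = (\<Sum>k<length ds. ds ! k * (j + 1) ^ k) mod p"

text \<open>Decoding with c = t errors and d = 0 erasures: a data word whose codeword differs
  from the received word in at most t positions.\<close>
definition rs_dec :: "nat \<Rightarrow> nat \<Rightarrow> nat \<Rightarrow> (nat \<Rightarrow> nat) \<Rightarrow> nat list" where
  "rs_dec n t p w = (SOME ds. length ds = t + 1 \<and> (\<forall>x\<in>set ds. x < p) \<and>
      card {j. j < n \<and> rs_enc p ds j \<noteq> w j} \<le> t)"

definition is_matching :: "nat \<Rightarrow> (nat \<Rightarrow> nat \<Rightarrow> bool) \<Rightarrow> (nat \<times> nat) set \<Rightarrow> bool" where
  "is_matching n H M \<longleftrightarrow>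
     (\<forall>(a, b)\<in>M. a < n \<and> b < n \<and> a \<noteq> b \<and> H a b) \<and>
     (\<forall>e\<in>M. \<forall>e'\<in>M. e \<noteq> e' \<longrightarrow> {fst e, snd e} \<inter> {fst e', snd e'} = {})"

definition is_max_matching :: "nat \<Rightarrow> (nat \<Rightarrow> nat \<Rightarrow> bool) \<Rightarrow> (nat \<times> nat) set \<Rightarrow> bool" where
  "is_max_matching n H M \<longleftrightarrow> is_matching n H M \<and> finite M \<and>
     (\<forall>M'. is_matching n H M' \<longrightarrow> card M' \<le> card M)"

definition matching_alg :: "(nat \<Rightarrow> (nat \<Rightarrow> nat \<Rightarrow> bool) \<Rightarrow> (nat \<times> nat) set) \<Rightarrow> bool" where
  "matching_alg alg \<longleftrightarrow> (\<forall>n H. is_max_matching n H (alg n H))"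

definition star :: "nat \<Rightarrow> nat \<Rightarrow> (nat \<Rightarrow> (nat \<Rightarrow> nat \<Rightarrow> bool) \<Rightarrow> (nat \<times> nat) set)
    \<Rightarrow> (nat \<Rightarrow> nat \<Rightarrow> bool) \<Rightarrow> (nat set \<times> nat set) option" where
  "star n t alg G =
    (let H = (\<lambda>x y. x < n \<and> y < n \<and> x \<noteq> y \<and> \<not> G x y);
         M = alg n H;
         N = {x. \<exists>(a, b)\<in>M. x = a \<or> x = b};
         Nb = {..<n} - N;
         T = {i\<in>Nb. \<exists>(j, k)\<in>M. H i j \<and> H i k};
         C = Nb - T;
         B = {j\<in>N. \<exists>k\<in>C. H j k};
         D = {..<n} - B
     in if n - 2 * t \<le> card C \<and> n - t \<le> card D then Some (C, D) else None)"

text \<open>Messages of the corrupt parties: (sender, recipient) indexed; all arbitrary.\<close>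
record adv =
  adv1 :: "nat \<Rightarrow> nat \<Rightarrow> nat \<times> nat"        (* step 1: (s_jj, s_ji) as received by i *)
  adv2 :: "nat \<Rightarrow> nat \<Rightarrow> nat \<Rightarrow> bool"      (* step 2: vector v_j as received by i *)
  advb :: "nat \<Rightarrow> bool"                    (* step 5: bit delivered by BB of corrupt sender *)
  adv5 :: "nat \<Rightarrow> nat \<Rightarrow> nat set"         (* step 5: set E_j as received by i *)
  adv6 :: "nat \<Rightarrow> nat \<Rightarrow> nat"             (* step 6: maj_j as received by i *)

type_synonym malg = "nat \<Rightarrow> (nat \<Rightarrow> nat \<Rightarrow> bool) \<Rightarrow> (nat \<times> nat) set"

text \<open>s_jk computed by an honest P_j.\<close>
definition share :: "nat \<Rightarrow> nat \<Rightarrow> (nat \<Rightarrow> bool list) \<Rightarrow> nat \<Rightarrow> nat \<Rightarrow> nat" where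
  "share n l m j k = rs_enc (prime_of n l) (msg_blocks n l (m j)) k"

definition recv1 :: "nat \<Rightarrow> nat \<Rightarrow> (nat \<Rightarrow> bool list) \<Rightarrow> nat set \<Rightarrow> adv \<Rightarrow> nat \<Rightarrow> nat \<Rightarrow> nat \<times> nat" where
  "recv1 n l m Cr A i j = (if j \<in> Cr then adv1 A j i else (share n l m j j, share n l m j i))"

definition vec :: "nat \<Rightarrow> nat \<Rightarrow> (nat \<Rightarrow> bool list) \<Rightarrow> nat set \<Rightarrow> adv \<Rightarrow> nat \<Rightarrow> nat \<Rightarrow> bool" where
  "vec n l m Cr A i j \<longleftrightarrow> share n l m i j = fst (recv1 n l m Cr A i j) \<and>
                           share n l m i i = snd (recv1 n l m Cr A i j)"

definition recv2 :: "nat \<Rightarrow> nat \<Rightarrow> (nat \<Rightarrow> bool list) \<Rightarrow> nat set \<Rightarrow> adv \<Rightarrow> nat \<Rightarrow> nat \<Rightarrow> nat \<Rightarrow> bool" where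
  "recv2 n l m Cr A i x = (if x \<in> Cr then adv2 A x i else vec n l m Cr A x)"

definition graph :: "nat \<Rightarrow> nat \<Rightarrow> (nat \<Rightarrow> bool list) \<Rightarrow> nat set \<Rightarrow> adv \<Rightarrow> nat \<Rightarrow> nat \<Rightarrow> nat \<Rightarrow> bool" where
  "graph n l m Cr A i x y \<longleftrightarrow> x < n \<and> y < n \<and> x \<noteq> y \<and>
      recv2 n l m Cr A i x y \<and> recv2 n l m Cr A i y x"

text \<open>The set E_i of an honest P_i (empty if noSTAR or the size checks fail);
  each party is counted as its own neighbour.\<close>
definition Eset :: "nat \<Rightarrow> nat \<Rightarrow> malg \<Rightarrow> (nat \<Rightarrow> bool list) \<Rightarrow> nat set \<Rightarrow> adv \<Rightarrow> nat \<Rightarrow> nat set" where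
  "Eset n l alg m Cr A i =
    (let t = tB n; G = graph n l m Cr A i in
     case star n t alg G of
       None \<Rightarrow> {}
     | Some (C, D) \<Rightarrow>
         (let F = {x. x < n \<and> t + 1 \<le> card {y\<in>C. y = x \<or> G x y}};
              E = {x. x < n \<and> 2 * t + 1 \<le> card {y\<in>F. y = x \<or> G x y}}
          in if 2 * t + 1 \<le> card F \<and> 2 * t + 1 \<le> card E then E else {}))"

text \<open>Bit delivered by the single-bit BB instance of sender x (same for all honest parties).\<close>
definition bcast :: "nat \<Rightarrow> nat \<Rightarrow> malg \<Rightarrow> (nat \<Rightarrow> bool list) \<Rightarrow> nat set \<Rightarrow> adv \<Rightarrow> nat \<Rightarrow> bool" where
  "bcast n l alg m Cr A x = (if x \<in> Cr then advb A x else Eset n l alg m Cr A x \<noteq> {})"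

definition proceed :: "nat \<Rightarrow> nat \<Rightarrow> malg \<Rightarrow> (nat \<Rightarrow> bool list) \<Rightarrow> nat set \<Rightarrow> adv \<Rightarrow> bool" where
  "proceed n l alg m Cr A \<longleftrightarrow> 2 * tB n + 1 \<le> card {x. x < n \<and> bcast n l alg m Cr A x}"

definition recvE :: "nat \<Rightarrow> nat \<Rightarrow> malg \<Rightarrow> (nat \<Rightarrow> bool list) \<Rightarrow> nat set \<Rightarrow> adv \<Rightarrow> nat \<Rightarrow> nat \<Rightarrow> nat set" where
  "recvE n l alg m Cr A i x = (if x \<in> Cr then adv5 A x i \<inter> {..<n} else Eset n l alg m Cr A x)"

text \<open>maj_x computed by P_i for a received set E (None = bottom).\<close>
definition majof :: "nat \<Rightarrow> nat \<Rightarrow> (nat \<Rightarrow> bool list) \<Rightarrow> nat set \<Rightarrow> adv \<Rightarrow> nat \<Rightarrow> nat set \<Rightarrow> nat option" where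
  "majof n l m Cr A i E =
    (if \<exists>v. (card E + 2) div 2 \<le> card {j\<in>E. snd (recv1 n l m Cr A i j) = v}
     then Some (SOME v. (card E + 2) div 2 \<le> card {j\<in>E. snd (recv1 n l m Cr A i j) = v})
     else None)"

definition majval :: "nat \<Rightarrow> nat \<Rightarrow> malg \<Rightarrow> (nat \<Rightarrow> bool list) \<Rightarrow> nat set \<Rightarrow> adv \<Rightarrow> nat \<Rightarrow> nat" where
  "majval n l alg m Cr A i =
    (SOME v. \<exists>E'. E' \<subseteq> {x. x < n \<and> bcast n l alg m Cr A x} \<and> tB n + 1 \<le> card E' \<and>
        (\<forall>x\<in>E'. majof n l m Cr A i (recvE n l alg m Cr A i x) = Some v))"

definition recv6 :: "nat \<Rightarrow> nat \<Rightarrow> malg \<Rightarrow> (nat \<Rightarrow> bool list) \<Rightarrow> nat set \<Rightarrow> adv \<Rightarrow> nat \<Rightarrow> nat \<Rightarrow> nat" where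
  "recv6 n l alg m Cr A i j = (if j \<in> Cr then adv6 A j i else majval n l alg m Cr A j)"

text \<open>Output of an honest P_i (m' is the predefined message output on abort).\<close>
definition party_output :: "nat \<Rightarrow> nat \<Rightarrow> malg \<Rightarrow> bool list \<Rightarrow> (nat \<Rightarrow> bool list) \<Rightarrow> nat set \<Rightarrow> adv \<Rightarrow> nat \<Rightarrow> bool list" where
  "party_output n l alg m' m Cr A i =
    (if proceed n l alg m Cr A
     then unblocks n l (rs_dec n (tB n) (prime_of n l) (recv6 n l alg m Cr A i))
     else m')"

text \<open>Total number of bits sent by honest parties (messages to other parties), plus the
  cost B1 of each of the n single-bit BB instances.\<close>
definition comm_cost :: "nat \<Rightarrow> nat \<Rightarrow> malg \<Rightarrow> (nat \<Rightarrow> bool list) \<Rightarrow> nat set \<Rightarrow> adv \<Rightarrow> nat \<Rightarrow> nat" where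
  "comm_cost n l alg m Cr A B1 =
    (let k = symbits (prime_of n l) in
     (\<Sum>i\<in>{..<n} - Cr.
        2 * k * (n - 1)
      + n * (n - 1)
      + (if Eset n l alg m Cr A i \<noteq> {} then n * (n - 1) else 0)
      + (if proceed n l alg m Cr A then k * (n - 1) else 0))
     + n * B1)"

end

theory Submission
  imports Defs "HOL-Computational_Algebra.Polynomial"
begin

text \<open>
  Let E be the set broadcast by an honest party whose STAR search succeeded. Its honest members
  all hold the same message: the honest part of the star's centre C agrees on the at least t + 1
  honest positions of D, every honest member of F agrees with an honest neighbour in C on its own
  position, and every honest member of E agrees with at least t + 1 honest members of F. Two such
  sets cannot carry different messages either: their honest parts, whose codewords coincide in at
  most t positions, would contain a matching of size t + 1 in the complement of the consistency
  graph, and a maximum matching that large makes STAR fail. Hence once 2t + 1 bits 1 are delivered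
  there is a common message, at least t + 1 honest sets vote for its codeword symbol at every
  position, every honest party sends the correct symbol, and unique decoding corrects the at most
  t symbols of the corrupt parties. If all honest inputs agree, the honest parties form a clique
  in every consistency graph, so every honest party succeeds and all of them proceed.
  The cost is dominated by the O(n^2) symbols of O(l/n + n) bits each and the O(n^3) bits of the
  consistency vectors and the sets E; the symbol length is controlled by a weak form of
  Bertrand's postulate.
\<close>

section \<open>Primes in dyadic intervals\<close>

lemma multiplicity_le_self:
  fixes p x :: nat assumes "prime p" "x > 0" shows "multiplicity p x \<le> x"
proof -
  have "multiplicity p x < 2 ^ multiplicity p x" by (rule less_exp)
  also have "\<dots> \<le> p ^ multiplicity p x"
    using prime_ge_2_nat[OF assms(1)] by (simp add: power_mono)
  also have "\<dots> \<le> x" using assms by (simp add: dvd_imp_le multiplicity_dvd)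
  finally show ?thesis by simp
qed

lemma multiplicity_eq_card_prime_power_divisors:
  fixes p x :: nat assumes "prime p" "x > 0" "x \<le> K"
  shows "multiplicity p x = card {i\<in>{1..K}. p ^ i dvd x}"
proof -
  have "{i\<in>{1..K}. p ^ i dvd x} = {1..multiplicity p x}"
    using power_dvd_iff_le_multiplicity[of x p] multiplicity_le_self[OF assms(1,2)] assms
    by (auto simp: prime_nat_iff)
  thus ?thesis by simp
qed

text \<open>Legendre's formula; the terms with i > n vanish, so any bound K \<ge> n works.\<close>
lemma multiplicity_fact_eq_sum:
  fixes p :: nat assumes p: "prime p" and "n \<le> K"
  shows "multiplicity p (fact n) = (\<Sum>i\<in>{1..K}. n div p ^ i)"
  using \<open>n \<le> K\<close>
proof (induction n)
  case (Suc n)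
  have "multiplicity p (fact (Suc n) :: nat) = multiplicity p (Suc n) + multiplicity p (fact n :: nat)"
    unfolding fact_Suc of_nat_id using p by (intro prime_elem_multiplicity_mult_distrib) auto
  also have "multiplicity p (Suc n) = (\<Sum>i\<in>{1..K}. of_bool (p ^ i dvd Suc n))"
    using multiplicity_eq_card_prime_power_divisors[OF p _ Suc.prems]
    by (simp add: Int_def)
  also have "multiplicity p (fact n :: nat) = (\<Sum>i\<in>{1..K}. n div p ^ i)"
    using Suc by simp
  also have "(\<Sum>i\<in>{1..K}. of_bool (p ^ i dvd Suc n)) + (\<Sum>i\<in>{1..K}. n div p ^ i)
      = (\<Sum>i\<in>{1..K}. Suc n div p ^ i)"
    unfolding sum.distrib[symmetric] by (intro sum.cong) (auto simp: div_Suc dvd_eq_mod_eq_0)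
  finally show ?case .
qed simp

lemma two_mul_div_le:
  fixes m q :: nat assumes "0 < q" shows "2 * m div q \<le> 2 * (m div q) + of_bool (q \<le> 2 * m)"
proof (cases "q \<le> 2 * m")
  case True
  have "m < (m div q + 1) * q" using div_less_iff_less_mult[OF assms, of m "m div q + 1"] by simp
  hence "2 * m < (2 * (m div q) + 2) * q" by (simp add: algebra_simps)
  hence "2 * m div q < 2 * (m div q) + 2" by (rule less_mult_imp_div_less)
  thus ?thesis using True by simp
qed simp

lemma fact_double: "(fact (2 * m) :: nat) = fact m * fact m * ((2 * m) choose m)"
  using binomial_fact_lemma[of m "2 * m"] by (simp add: mult_2)

lemma multiplicity_central_binomial_le:
  fixes p :: nat assumes p: "prime p"
  shows "multiplicity p ((2 * m) choose m) \<le> card {i\<in>{1..2*m}. p ^ i \<le> 2 * m}"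
proof -
  have "multiplicity p (fact (2 * m) :: nat)
      = 2 * multiplicity p (fact m :: nat) + multiplicity p ((2 * m) choose m)"
    using p by (simp add: fact_double prime_elem_multiplicity_mult_distrib)
  moreover have "multiplicity p (fact (2 * m) :: nat) = (\<Sum>i\<in>{1..2*m}. 2 * m div p ^ i)"
    "multiplicity p (fact m :: nat) = (\<Sum>i\<in>{1..2*m}. m div p ^ i)"
    by (rule multiplicity_fact_eq_sum[OF p]; simp)+
  moreover have "(\<Sum>i\<in>{1..2*m}. 2 * m div p ^ i)
      \<le> (\<Sum>i\<in>{1..2*m}. 2 * (m div p ^ i)) + (\<Sum>i\<in>{1..2*m}. of_bool (p ^ i \<le> 2 * m))"
    unfolding sum.distrib[symmetric] using prime_gt_0_nat[OF p] by (intro sum_mono two_mul_div_le) simp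
  moreover have "(\<Sum>i\<in>{1..2*m}. of_bool (p ^ i \<le> 2 * m)) = card {i\<in>{1..2*m}. p ^ i \<le> 2 * m}"
    by (simp add: Int_def)
  ultimately show ?thesis by (simp add: sum_distrib_left)
qed

lemma prime_power_multiplicity_central_binomial_le:
  fixes p :: nat assumes p: "prime p" and "0 < m"
  shows "p ^ multiplicity p ((2 * m) choose m) \<le> 2 * m"
proof (rule ccontr)
  define v where "v = multiplicity p ((2 * m) choose m)"
  assume "\<not> p ^ multiplicity p ((2 * m) choose m) \<le> 2 * m"
  hence big: "2 * m < p ^ v" by (simp add: v_def)
  have "{i\<in>{1..2*m}. p ^ i \<le> 2 * m} \<subseteq> {1..<v}"
  proof
    fix i assume i: "i \<in> {i\<in>{1..2*m}. p ^ i \<le> 2 * m}"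
    hence "p ^ i < p ^ v" using big le_less_trans by blast
    hence "i < v" by (rule power_less_imp_less_exp[OF prime_gt_1_nat[OF p]])
    thus "i \<in> {1..<v}" using i by simp
  qed
  hence "card {i\<in>{1..2*m}. p ^ i \<le> 2 * m} \<le> card {1..<v}" by (intro card_mono) simp
  moreover have "v \<le> card {i\<in>{1..2*m}. p ^ i \<le> 2 * m}"
    unfolding v_def by (rule multiplicity_central_binomial_le[OF p])
  moreover have "v \<noteq> 0" using big \<open>0 < m\<close> by (cases v) auto
  ultimately show False by simp
qed

text \<open>A weak Bertrand postulate, by Erdos' argument: with m = 2^(2a+2), if no prime lay in
  (2^a, 2m] then 2^m \<le> (2m choose m) \<le> (2m)^(2^a), which is false.\<close>
lemma exists_prime_between_powers_of_two: "\<exists>p::nat. prime p \<and> 2 ^ a < p \<and> p \<le> 2 ^ (2 * a + 3)"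
proof (rule ccontr)
  assume none: "\<not> ?thesis"
  define m :: nat where "m = 2 ^ (2 * a + 2)"
  have "0 < m" by (simp add: m_def)
  have two_m: "2 * m = 2 ^ (2 * a + 3)" by (simp add: m_def power_add)
  let ?C = "(2 * m) choose m"
  have small_factors: "prime_factors ?C \<subseteq> {1..2 ^ a}"
  proof
    fix q assume "q \<in> prime_factors ?C"
    hence "prime q" "q dvd fact (2 * m)"
      using dvd_trans[OF _ dvd_triv_right[of ?C "fact m * fact m"]]
      by (auto simp: in_prime_factors_iff fact_double)
    hence "q \<le> 2 * m" using prime_dvd_fact_iff by blast
    thus "q \<in> {1..2 ^ a}" using none \<open>prime q\<close> two_m prime_gt_0_nat[of q] not_less by auto
  qed
  have "(of_nat (2 * m) / of_nat m :: real) ^ m \<le> of_nat ?C"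
    by (rule binomial_ge_n_over_k_pow_k) simp
  moreover have "(of_nat (2 * m) / of_nat m :: real) = 2" using \<open>0 < m\<close> by simp
  ultimately have "of_nat (2 ^ m) \<le> (of_nat ?C :: real)" by simp
  hence "2 ^ m \<le> ?C" by (simp only: of_nat_le_iff)
  also have "?C = (\<Prod>q\<in>prime_factors ?C. q ^ multiplicity q ?C)"
    by (rule prime_factorization_nat) simp
  also have "\<dots> \<le> (2 * m) ^ (2 ^ a)"
    using prime_power_multiplicity_central_binomial_le[OF _ \<open>0 < m\<close>] card_mono[OF _ small_factors] \<open>0 < m\<close>
    by (intro prod_le_power) (auto simp: in_prime_factors_iff)
  also have "\<dots> = 2 ^ ((2 * a + 3) * 2 ^ a)" by (simp add: two_m power_mult)
  finally have "2 ^ m \<le> (2::nat) ^ ((2 * a + 3) * 2 ^ a)" .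
  hence "m \<le> (2 * a + 3) * 2 ^ a" by (rule power_le_imp_le_exp[rotated]) simp
  moreover have "(2 * a + 3) * 2 ^ a < m"
  proof -
    have "a < 2 ^ a" "(1::nat) \<le> 2 ^ a" by (rule less_exp) simp
    hence "2 * a + 3 < 4 * 2 ^ a" by linarith
    hence "(2 * a + 3) * 2 ^ a < 4 * 2 ^ a * 2 ^ a" by simp
    also have "\<dots> = m" unfolding m_def by (simp add: power_add mult_2 flip: power_mult)
    finally show ?thesis .
  qed
  ultimately show False by simp
qed

section \<open>Reed-Solomon codes\<close>

lemma int_dvd_imp_eq:
  fixes x y p :: int assumes "p dvd x - y" "\<bar>x - y\<bar> < p" shows "x = y"
proof (rule ccontr)
  assume "x \<noteq> y"
  hence "\<bar>p\<bar> \<le> \<bar>x - y\<bar>" using assms(1) by (intro dvd_imp_le_int) auto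
  thus False using assms(2) by linarith
qed

lemma const_poly_dvd_if_roots_mod_prime:
  fixes p :: int and f :: "int poly"
  assumes p: "prime p" and "R \<subseteq> {0..<p}" "degree f < card R" "\<And>r. r \<in> R \<Longrightarrow> p dvd poly f r"
  shows "[:p:] dvd f"
  using assms(2-)
proof (induction "card R" arbitrary: f R)
  case (Suc c)
  then obtain a where a: "a \<in> R" by fastforce
  define q where "q = synthetic_div f a"
  have f_eq: "f = [:- a, 1:] * q + [:poly f a:]"
    unfolding q_def by (rule synthetic_div_correct'[symmetric])
  have "[:p:] dvd q"
  proof (cases "degree f = 0")
    case True
    hence "q = 0" by (simp add: q_def synthetic_div_eq_0_iff)
    thus ?thesis by simp
  next
    case False
    have "p dvd poly q b" if b: "b \<in> R - {a}" for b
    proof -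
      have "(b - a) * poly q b = poly f b - poly f a"
        using arg_cong[OF f_eq, of "\<lambda>g. poly g b"] by (simp add: algebra_simps)
      hence "p dvd (b - a) * poly q b" using Suc.prems(3) b a by simp
      moreover have "\<not> p dvd b - a"
      proof
        assume "p dvd b - a"
        moreover have "a \<in> {0..<p}" "b \<in> {0..<p}" using b a Suc.prems(1) by auto
        hence "\<bar>b - a\<bar> < p" by auto
        ultimately show False using b int_dvd_imp_eq by blast
      qed
      ultimately show ?thesis using p prime_dvd_mult_iff by blast
    qed
    moreover have "degree q < card (R - {a})"
      using False Suc.hyps(2) Suc.prems(2) a by (simp add: q_def degree_synthetic_div)
    ultimately show ?thesis
      using Suc.hyps(1)[of "R - {a}" q] Suc.hyps(2) Suc.prems(1) a by fastforce
  qed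
  moreover have "[:p:] dvd [:poly f a:]" using Suc.prems(3) a by simp
  ultimately have "[:p:] dvd [:- a, 1:] * q + [:poly f a:]" by (intro dvd_add dvd_mult)
  thus ?case using f_eq by metis
qed simp

definition data_poly :: "nat list \<Rightarrow> int poly" where
  "data_poly ds = (\<Sum>k<length ds. monom (int (ds ! k)) k)"

lemma coeff_data_poly: "coeff (data_poly ds) k = (if k < length ds then int (ds ! k) else 0)"
  by (simp add: data_poly_def coeff_sum)

lemma degree_data_poly_less: "ds \<noteq> [] \<Longrightarrow> degree (data_poly ds) < length ds"
  by (intro degree_lessI) (auto simp: coeff_data_poly)

lemma rs_enc_eq_poly_data_poly: "int (rs_enc p ds j) = poly (data_poly ds) (int j + 1) mod int p"
  by (simp add: rs_enc_def data_poly_def poly_sum poly_monom of_nat_mod add.commute)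

lemma rs_enc_eq_on_imp_eq:
  assumes p: "prime p" "n < p" and len: "length ds = length ds'"
    and bounded: "\<forall>x\<in>set ds. x < p" "\<forall>x\<in>set ds'. x < p"
    and K: "K \<subseteq> {..<n}" "length ds \<le> card K"
    and agree: "\<And>j. j \<in> K \<Longrightarrow> rs_enc p ds j = rs_enc p ds' j"
  shows "ds = ds'"
proof (cases "ds = []")
  case False
  let ?f = "data_poly ds - data_poly ds'"
  have "[:int p:] dvd ?f"
  proof (rule const_poly_dvd_if_roots_mod_prime)
    show "prime (int p)" using p by simp
    show "(\<lambda>j. int j + 1) ` K \<subseteq> {0..<int p}" using K p by auto
    have "degree ?f < length ds"
      using degree_diff_le_max[of "data_poly ds" "data_poly ds'"] degree_data_poly_less[of ds]
        degree_data_poly_less[of ds'] False len by fastforce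
    moreover have "card ((\<lambda>j. int j + 1) ` K) = card K" by (rule card_image) (auto simp: inj_on_def)
    ultimately show "degree ?f < card ((\<lambda>j. int j + 1) ` K)" using K by simp
  next
    fix r assume "r \<in> (\<lambda>j. int j + 1) ` K"
    then obtain j where "j \<in> K" "r = int j + 1" by blast
    thus "int p dvd poly ?f r"
      using agree[of j] rs_enc_eq_poly_data_poly[of p ds j] rs_enc_eq_poly_data_poly[of p ds' j]
      by (simp add: mod_eq_dvd_iff dvd_diff_commute)
  qed
  have "ds ! k = ds' ! k" if k: "k < length ds" for k
  proof -
    have "int p dvd int (ds ! k) - int (ds' ! k)"
      using \<open>[:int p:] dvd ?f\<close> k len unfolding const_poly_dvd_iff
      by (metis coeff_diff coeff_data_poly)
    moreover have "ds ! k < p" "ds' ! k < p" using bounded k len by simp_all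
    hence "\<bar>int (ds ! k) - int (ds' ! k)\<bar> < int p" by (simp add: abs_if)
    ultimately have "int (ds ! k) = int (ds' ! k)" by (rule int_dvd_imp_eq)
    thus ?thesis by simp
  qed
  thus ?thesis using len by (intro nth_equalityI) auto
qed (use len in simp)

lemma rs_dec_unique_decoding:
  assumes p: "prime p" "n < p" and "3 * t < n"
    and ds: "length ds = t + 1" "\<forall>x\<in>set ds. x < p"
    and errors: "finite X" "card X \<le> t" "\<And>j. j < n \<Longrightarrow> j \<notin> X \<Longrightarrow> w j = rs_enc p ds j"
  shows "rs_dec n t p w = ds"
proof -
  define bad where "bad ds' = {j. j < n \<and> rs_enc p ds' j \<noteq> w j}" for ds'
  let ?ok = "\<lambda>ds. length ds = t + 1 \<and> (\<forall>x\<in>set ds. x < p) \<and> card (bad ds) \<le> t"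
  have "card (bad ds) \<le> card X"
    by (rule card_mono[OF errors(1)]) (use errors(3) in \<open>force simp: bad_def\<close>)
  hence "?ok ds" using ds errors(2) by simp
  hence ok: "?ok (rs_dec n t p w)" unfolding rs_dec_def bad_def by (rule someI)
  let ?K = "({..<n} - X) - bad (rs_dec n t p w)"
  have "n - card X \<le> card ({..<n} - X)" using diff_card_le_card_Diff[OF errors(1), of "{..<n}"] by simp
  moreover have "card ({..<n} - X) - card (bad (rs_dec n t p w)) \<le> card ?K"
    by (rule diff_card_le_card_Diff) (simp add: bad_def)
  ultimately have "t + 1 \<le> card ?K" using ok errors(2) \<open>3 * t < n\<close> by linarith
  show ?thesis
  proof (rule rs_enc_eq_on_imp_eq[OF p, of _ _ ?K])
    show "?K \<subseteq> {..<n}" by auto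
    show "\<And>j. j \<in> ?K \<Longrightarrow> rs_enc p (rs_dec n t p w) j = rs_enc p ds j"
      using errors(3) by (auto simp: bad_def)
  qed (use ok ds \<open>t + 1 \<le> card ?K\<close> in auto)
qed

section \<open>Protocol parameters and message blocks\<close>

lemma bits_to_nat_less: "bits_to_nat bs < 2 ^ length bs"
  by (induction bs) (auto simp: bits_to_nat_def)

lemma nat_to_bits_Suc: "nat_to_bits (Suc w) x = odd x # nat_to_bits w (x div 2)"
proof -
  have "nat_to_bits (Suc w) x = map (\<lambda>i. odd (x div 2 ^ i)) (0 # map Suc [0..<w])"
    unfolding nat_to_bits_def by (simp only: upt_conv_Cons map_Suc_upt)
  thus ?thesis by (simp add: nat_to_bits_def div_mult2_eq)
qed

lemma nat_to_bits_bits_to_nat: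
  "length bs \<le> w \<Longrightarrow> nat_to_bits w (bits_to_nat bs) = bs @ replicate (w - length bs) False"
proof (induction bs arbitrary: w)
  case Nil thus ?case by (simp add: bits_to_nat_def nat_to_bits_def map_replicate_const)
next
  case (Cons b bs)
  then obtain w' where "w = Suc w'" by (cases w) auto
  thus ?case using Cons by (simp add: nat_to_bits_Suc bits_to_nat_def)
qed

lemma take_drop_append_replicate:
  assumes "i + b \<le> length xs + N"
  shows "take b (drop i (xs @ replicate N x)) =
    take b (drop i xs) @ replicate (b - length (take b (drop i xs))) x"
  using assms by simp

lemma concat_map_take_drop: "concat (map (\<lambda>k. take b (drop (k * b) xs)) [0..<q]) = take (q * b) xs"
proof (induction q)
  case (Suc q)
  have "take (q * b + b) xs = take (q * b) xs @ take b (drop (q * b) xs)" by (rule take_add)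
  thus ?case using Suc by (simp add: add.commute)
qed simp

lemma length_msg_blocks [simp]: "length (msg_blocks n l v) = tB n + 1"
  by (simp add: msg_blocks_def)

lemma msg_blocks_less: "x \<in> set (msg_blocks n l v) \<Longrightarrow> x < 2 ^ blk n l"
  unfolding msg_blocks_def
  using order_less_le_trans[OF bits_to_nat_less power_increasing[of _ "blk n l" 2]]
  by fastforce

lemma le_blocks_times_blk: "l \<le> (tB n + 1) * blk n l"
proof -
  have "(l + tB n) mod (tB n + 1) \<le> tB n" using mod_less_divisor[of "tB n + 1" "l + tB n"] by linarith
  thus ?thesis
    unfolding blk_def using div_mult_mod_eq[of "l + tB n" "tB n + 1"] by (simp only: mult.commute)
qed

lemma unblocks_msg_blocks:
  assumes "length v = l" shows "unblocks n l (msg_blocks n l v) = v"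
proof -
  let ?b = "blk n l" and ?q = "tB n + 1"
  define ys where "ys = v @ replicate (?q * ?b) False"
  have block: "nat_to_bits ?b (bits_to_nat (take ?b (drop (k * ?b) v))) = take ?b (drop (k * ?b) ys)"
    if "k < ?q" for k
  proof -
    have "k * ?b \<le> tB n * ?b" using that by simp
    hence "k * ?b + ?b \<le> length v + ?q * ?b" by (simp only: add_mult_distrib)
    thus ?thesis unfolding ys_def
      by (simp only: take_drop_append_replicate) (rule nat_to_bits_bits_to_nat, simp)
  qed
  have "map (nat_to_bits ?b) (msg_blocks n l v) = map (\<lambda>k. take ?b (drop (k * ?b) ys)) [0..<?q]"
    unfolding msg_blocks_def map_map by (rule map_cong) (auto simp: block)
  hence "concat (map (nat_to_bits ?b) (msg_blocks n l v)) = take (?q * ?b) ys"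
    by (simp only: concat_map_take_drop)
  thus ?thesis
    using le_blocks_times_blk[of l n] assms by (simp add: unblocks_def ys_def)
qed

lemma three_tB_lt: "1 \<le> n \<Longrightarrow> 3 * tB n < n"
  unfolding tB_def by linarith

lemma prime_of_spec:
  "prime (prime_of n l)" "n < prime_of n l" "2 ^ blk n l \<le> prime_of n l"
  "prime_of n l \<le> 2 ^ (2 * (blk n l + n) + 3)"
proof -
  obtain q :: nat where q: "prime q" "2 ^ (blk n l + n) < q" "q \<le> 2 ^ (2 * (blk n l + n) + 3)"
    using exists_prime_between_powers_of_two by blast
  have "n < 2 ^ n" by (rule less_exp)
  also have "(2::nat) ^ n \<le> 2 ^ (blk n l + n)" by (intro power_increasing) auto
  finally have "n < 2 ^ (blk n l + n)" .
  moreover have "(2::nat) ^ blk n l \<le> 2 ^ (blk n l + n)" by (intro power_increasing) auto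
  ultimately have P: "prime q \<and> n < q \<and> 2 ^ blk n l \<le> q" using q by linarith
  have "prime (prime_of n l) \<and> n < prime_of n l \<and> 2 ^ blk n l \<le> prime_of n l"
    unfolding prime_of_def by (rule LeastI[of _ q]) (rule P)
  thus "prime (prime_of n l)" "n < prime_of n l" "2 ^ blk n l \<le> prime_of n l" by auto
  have "prime_of n l \<le> q" unfolding prime_of_def by (rule Least_le) (rule P)
  thus "prime_of n l \<le> 2 ^ (2 * (blk n l + n) + 3)" using q by linarith
qed

lemma msg_blocks_less_prime_of: "x \<in> set (msg_blocks n l v) \<Longrightarrow> x < prime_of n l"
  using msg_blocks_less prime_of_spec(3) order_less_le_trans by blast

section \<open>Maximum matchings and the STAR procedure\<close>

lemma card_le_card_if_covered_by_subsingletons: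
  assumes "A \<subseteq> (\<Union>i\<in>I. S i)" "finite I" "\<And>i. i \<in> I \<Longrightarrow> finite (S i) \<and> card (S i) \<le> 1"
  shows "card A \<le> card I"
proof -
  have "card A \<le> card (\<Union>i\<in>I. S i)" using assms by (intro card_mono) auto
  also have "\<dots> \<le> (\<Sum>i\<in>I. card (S i))" by (rule card_UN_le[OF assms(2)])
  also have "\<dots> \<le> (\<Sum>i\<in>I. 1)" using assms(3) by (intro sum_mono) auto
  finally show ?thesis by simp
qed

definition matched :: "(nat \<times> nat) set \<Rightarrow> nat set" where
  "matched M = fst ` M \<union> snd ` M"

definition complement :: "nat \<Rightarrow> (nat \<Rightarrow> nat \<Rightarrow> bool) \<Rightarrow> nat \<Rightarrow> nat \<Rightarrow> bool" where
  "complement n G x y \<longleftrightarrow> x < n \<and> y < n \<and> x \<noteq> y \<and> \<not> G x y"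

lemma is_matching_subset: "is_matching n H M \<Longrightarrow> M' \<subseteq> M \<Longrightarrow> is_matching n H M'"
  unfolding is_matching_def by blast

lemma is_matching_insert:
  assumes "is_matching n H M" "x < n" "y < n" "x \<noteq> y" "H x y" "x \<notin> matched M" "y \<notin> matched M"
  shows "is_matching n H (insert (x, y) M)"
  using assms unfolding is_matching_def matched_def by (auto simp: image_iff)

locale max_matching =
  fixes n :: nat and H :: "nat \<Rightarrow> nat \<Rightarrow> bool" and M :: "(nat \<times> nat) set"
  assumes max: "is_max_matching n H M"
    and edge: "\<And>x y. H x y \<Longrightarrow> x < n \<and> y < n \<and> x \<noteq> y \<and> H y x"
begin

lemma finite_M: "finite M"
  using max by (simp add: is_max_matching_def)

lemma matching: "is_matching n H M"
  using max by (simp add: is_max_matching_def)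

lemma edge_in_M: "(a, b) \<in> M \<Longrightarrow> a < n \<and> b < n \<and> a \<noteq> b \<and> H a b"
  using matching by (auto simp: is_matching_def)

lemma disjoint_edges: "e \<in> M \<Longrightarrow> e' \<in> M \<Longrightarrow> e \<noteq> e' \<Longrightarrow> {fst e, snd e} \<inter> {fst e', snd e'} = {}"
  using matching by (auto simp: is_matching_def)

lemma matched_subset: "matched M \<subseteq> {..<n}"
  using edge_in_M by (force simp: matched_def)

lemma card_matched: "card (matched M) = 2 * card M"
proof -
  have "matched M = (\<Union>e\<in>M. {fst e, snd e})" by (auto simp: matched_def)
  hence "card (matched M) = (\<Sum>e\<in>M. card {fst e, snd e})"
    using finite_M disjoint_edges by (simp add: card_UN_disjoint)
  also have "\<dots> = (\<Sum>e\<in>M. 2)"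
    using edge_in_M by (intro sum.cong) (auto simp: card_insert_if)
  finally show ?thesis by simp
qed

lemma bigger_matching_absurd:
  assumes "is_matching n H M'" "finite M'" "card M < card M'" shows False
  using max assms by (auto simp: is_max_matching_def not_le[symmetric])

lemma unmatched_not_adjacent:
  assumes "u \<notin> matched M" "w \<notin> matched M" shows "\<not> H u w"
proof
  assume "H u w"
  hence "is_matching n H (insert (u, w) M)"
    using matching edge assms by (intro is_matching_insert) auto
  moreover have "(u, w) \<notin> M" using assms by (force simp: matched_def)
  ultimately show False using finite_M by (intro bigger_matching_absurd[of "insert (u, w) M"]) auto
qed

lemma no_augmenting_path:
  assumes e: "(a, b) \<in> M" and "u \<noteq> w" "u \<notin> matched M" "w \<notin> matched M"
  shows "\<not> (H u a \<and> H w b)"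
proof
  assume "H u a \<and> H w b"
  hence adj: "H u a" "H b w" using edge by auto
  let ?M0 = "M - {(a, b)}"
  have ab: "a \<notin> matched ?M0" "b \<notin> matched ?M0"
    using disjoint_edges[OF e] by (fastforce simp: matched_def)+
  have "a \<in> matched M" "b \<in> matched M" using e by (force simp: matched_def)+
  moreover have "matched ?M0 \<subseteq> matched M" by (auto simp: matched_def)
  ultimately have uw: "u \<notin> matched ?M0" "w \<notin> matched ?M0" "u \<noteq> b" "w \<noteq> a"
    using assms by auto
  have "is_matching n H (insert (b, w) ?M0)"
    using adj edge ab uw by (intro is_matching_insert is_matching_subset[OF matching]) auto
  hence "is_matching n H (insert (u, a) (insert (b, w) ?M0))"
    using adj edge ab uw \<open>u \<noteq> w\<close> edge_in_M[OF e]
    by (elim is_matching_insert) (auto simp: matched_def)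
  moreover have "(b, w) \<notin> M" "(u, a) \<notin> M"
    using assms(3,4) unfolding matched_def by (force simp: image_iff)+
  hence "card (insert (u, a) (insert (b, w) ?M0)) = card M + 1"
    using finite_M card_Suc_Diff1[OF finite_M e] uw(3) by simp
  ultimately show False using finite_M by (intro bigger_matching_absurd[of "insert (u, a) (insert (b, w) ?M0)"]) auto
qed

lemma card_le_card_vertex_cover:
  assumes "finite S" and cover: "\<And>x y. H x y \<Longrightarrow> x \<in> S \<or> y \<in> S"
  shows "card M \<le> card S"
proof (rule card_le_card_if_covered_by_subsingletons[where S = "\<lambda>s. {e\<in>M. s \<in> {fst e, snd e}}"])
  show "M \<subseteq> (\<Union>s\<in>S. {e\<in>M. s \<in> {fst e, snd e}})"
  proof
    fix e assume "e \<in> M"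
    hence "fst e \<in> S \<or> snd e \<in> S" using cover edge_in_M[of "fst e" "snd e"] by simp
    thus "e \<in> (\<Union>s\<in>S. {e\<in>M. s \<in> {fst e, snd e}})" using \<open>e \<in> M\<close> by blast
  qed
  show "finite {e\<in>M. s \<in> {fst e, snd e}} \<and> card {e\<in>M. s \<in> {fst e, snd e}} \<le> 1" for s
  proof -
    have "e = e'" if "e \<in> M" "e' \<in> M" "s \<in> {fst e, snd e}" "s \<in> {fst e', snd e'}" for e e'
      using disjoint_edges[OF that(1,2)] that(3,4) by blast
    thus ?thesis using finite_M by (simp add: card_le_Suc0_iff_eq)
  qed
qed fact

end

text \<open>In the notation of STAR, star_C is the set N-bar minus T and star_D is P minus B.\<close>
definition star_C :: "nat \<Rightarrow> (nat \<Rightarrow> nat \<Rightarrow> bool) \<Rightarrow> (nat \<times> nat) set \<Rightarrow> nat set" where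
  "star_C n H M = {i \<in> {..<n} - matched M. \<forall>(j, k)\<in>M. \<not> (H i j \<and> H i k)}"

definition star_D :: "nat \<Rightarrow> (nat \<Rightarrow> nat \<Rightarrow> bool) \<Rightarrow> (nat \<times> nat) set \<Rightarrow> nat set" where
  "star_D n H M = {..<n} - {j \<in> matched M. \<exists>k\<in>star_C n H M. H j k}"

lemma star_altdef:
  "star n t alg G =
    (let H = complement n G; M = alg n H; C = star_C n H M; D = star_D n H M
     in if n - 2 * t \<le> card C \<and> n - t \<le> card D then Some (C, D) else None)"
proof -
  have H: "(\<lambda>x y. x < n \<and> y < n \<and> x \<noteq> y \<and> \<not> G x y) = complement n G"
    by (simp add: complement_def fun_eq_iff)
  have N: "{x. \<exists>(a, b)\<in>M. x = a \<or> x = b} = matched M" for M :: "(nat \<times> nat) set"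
    by (force simp: matched_def)
  have C: "{..<n} - matched M - {i \<in> {..<n} - matched M. \<exists>(j, k)\<in>M. H i j \<and> H i k}
      = star_C n H M" for H M by (auto simp: star_C_def)
  show ?thesis
    unfolding star_def Let_def H by (simp only: N C star_D_def[symmetric])
qed

context max_matching
begin

lemma star_C_subset: "star_C n H M \<subseteq> {..<n} - matched M"
  by (auto simp: star_C_def)

lemma star_C_subset_star_D: "star_C n H M \<subseteq> star_D n H M"
  using star_C_subset by (auto simp: star_D_def)

lemma star_C_star_D_nonadjacent:
  assumes "c \<in> star_C n H M" "d \<in> star_D n H M" shows "\<not> H c d"
proof
  assume "H c d"
  show False
  proof (cases "d \<in> matched M")
    case True
    thus False using assms \<open>H c d\<close> edge by (auto simp: star_D_def)
  next
    case False
    thus False using unmatched_not_adjacent \<open>H c d\<close> star_C_subset assms(1) by blast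
  qed
qed

lemma card_star_C_le: "card (star_C n H M) \<le> n - 2 * card M"
proof -
  have "card (star_C n H M) \<le> card ({..<n} - matched M)"
    by (intro card_mono star_C_subset) simp
  also have "\<dots> = n - 2 * card M"
    using matched_subset card_matched by (simp add: card_Diff_subset finite_subset)
  finally show ?thesis .
qed

lemma card_star_D_ge: "n - card M \<le> card (star_D n H M)"
proof -
  let ?B = "{j \<in> matched M. \<exists>k\<in>star_C n H M. H j k}"
  have "card ?B \<le> card M"
  proof (rule card_le_card_if_covered_by_subsingletons[where S = "\<lambda>e. ?B \<inter> {fst e, snd e}"])
    show "?B \<subseteq> (\<Union>e\<in>M. ?B \<inter> {fst e, snd e})" by (force simp: matched_def)
    show "finite (?B \<inter> {fst e, snd e}) \<and> card (?B \<inter> {fst e, snd e}) \<le> 1" if e: "e \<in> M" for e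
    proof -
      obtain a b where ab: "e = (a, b)" by force
      have "\<not> (a \<in> ?B \<and> b \<in> ?B)"
      proof
        assume "a \<in> ?B \<and> b \<in> ?B"
        then obtain c c' where c: "c \<in> star_C n H M" "H a c" and c': "c' \<in> star_C n H M" "H b c'"
          by blast
        have "H c a" "H c' b" using c c' edge by auto
        moreover have "c \<notin> matched M" "c' \<notin> matched M" using c c' star_C_subset by auto
        ultimately show False
          using no_augmenting_path[of a b c c'] c(1) e ab by (cases "c = c'") (auto simp: star_C_def)
      qed
      hence "?B \<inter> {fst e, snd e} \<subseteq> {a} \<or> ?B \<inter> {fst e, snd e} \<subseteq> {b}" using ab by auto
      thus ?thesis using card_mono[of "{a}"] card_mono[of "{b}"] by auto
    qed
  qed (rule finite_M)
  moreover have "star_D n H M = {..<n} - ?B" by (simp add: star_D_def)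
  moreover have "?B \<subseteq> {..<n}" using matched_subset by auto
  ultimately show ?thesis by (simp add: card_Diff_subset finite_subset)
qed

text \<open>Each edge of the matching accounts for at most one vertex of Hon outside C: one of its
  endpoints, or an unmatched vertex adjacent to both of its endpoints.\<close>
lemma card_outside_star_C_le:
  assumes "Hon \<subseteq> {..<n}" and indep: "\<And>x y. x \<in> Hon \<Longrightarrow> y \<in> Hon \<Longrightarrow> \<not> H x y"
  shows "card (Hon - star_C n H M) \<le> card M"
proof (rule card_le_card_if_covered_by_subsingletons)
  let ?S = "\<lambda>(a, b). Hon \<inter> ({a, b} \<union> {i. i \<notin> matched M \<and> H i a \<and> H i b})"
  show "Hon - star_C n H M \<subseteq> (\<Union>e\<in>M. ?S e)"
  proof
    fix x assume x: "x \<in> Hon - star_C n H M"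
    show "x \<in> (\<Union>e\<in>M. ?S e)"
    proof (cases "x \<in> matched M")
      case True
      then obtain a b where "(a, b) \<in> M" "x \<in> {a, b}" by (force simp: matched_def)
      thus ?thesis using x by force
    next
      case False
      then obtain a b where "(a, b) \<in> M" "H x a" "H x b" using x assms(1) by (auto simp: star_C_def)
      thus ?thesis using x False by force
    qed
  qed
  show "finite (?S e) \<and> card (?S e) \<le> 1" if e: "e \<in> M" for e
  proof -
    obtain a b where ab: "e = (a, b)" by force
    have "x = y" if "x \<in> ?S e" "y \<in> ?S e" for x y
    proof (rule ccontr)
      assume "x \<noteq> y"
      have "x \<in> Hon" "y \<in> Hon" "x \<in> {a, b} \<or> (x \<notin> matched M \<and> H x a \<and> H x b)"
        "y \<in> {a, b} \<or> (y \<notin> matched M \<and> H y a \<and> H y b)" using that ab by auto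
      moreover have "H a b" using edge_in_M e ab by auto
      ultimately show False
        using \<open>x \<noteq> y\<close> indep[of x y] indep[of y x] no_augmenting_path[of a b x y] e ab by auto
    qed
    moreover have "finite (?S e)" using assms(1) by (auto simp: ab intro: finite_subset)
    ultimately show ?thesis by (simp add: card_le_Suc0_iff_eq)
  qed
qed (rule finite_M)

end

lemma max_matching_complement:
  assumes "matching_alg alg" "\<And>x y. G x y = G y x"
  shows "max_matching n (complement n G) (alg n (complement n G))"
  using assms by unfold_locales (auto simp: matching_alg_def complement_def)

lemma star_SomeD:
  assumes alg: "matching_alg alg" and sym: "\<And>x y. G x y = G y x"
    and star: "star n t alg G = Some (C, D)"
  shows "C \<subseteq> D" "D \<subseteq> {..<n}" "n - 2 * t \<le> card C" "n - t \<le> card D"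
    and "\<And>c d. c \<in> C \<Longrightarrow> d \<in> D \<Longrightarrow> c \<noteq> d \<Longrightarrow> G c d"
proof -
  interpret max_matching n "complement n G" "alg n (complement n G)"
    by (rule max_matching_complement[OF alg sym])
  have CD: "C = star_C n (complement n G) (alg n (complement n G))"
    "D = star_D n (complement n G) (alg n (complement n G))"
    using star by (auto simp: star_altdef Let_def split: if_splits)
  show "C \<subseteq> D" unfolding CD by (rule star_C_subset_star_D)
  show "D \<subseteq> {..<n}" unfolding CD by (auto simp: star_D_def)
  show "n - 2 * t \<le> card C" "n - t \<le> card D"
    using star by (auto simp: star_altdef Let_def split: if_splits)
  show "G c d" if "c \<in> C" "d \<in> D" "c \<noteq> d" for c d
    using star_C_star_D_nonadjacent[of c d] that \<open>D \<subseteq> {..<n}\<close> \<open>C \<subseteq> D\<close>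
    unfolding CD by (auto simp: complement_def)
qed

lemma star_eq_None_if_large_matching:
  assumes alg: "matching_alg alg" and sym: "\<And>x y. G x y = G y x"
    and M': "is_matching n (complement n G) M'" "finite M'" "t < card M'" and "2 * t < n"
  shows "star n t alg G = None"
proof -
  interpret max_matching n "complement n G" "alg n (complement n G)"
    by (rule max_matching_complement[OF alg sym])
  have "card M' \<le> card (alg n (complement n G))"
    using max M' by (simp add: is_max_matching_def)
  hence "card (star_C n (complement n G) (alg n (complement n G))) < n - 2 * t"
    using card_star_C_le M'(3) \<open>2 * t < n\<close> by linarith
  thus ?thesis by (simp add: star_altdef Let_def)
qed

lemma star_eq_Some_if_honest_clique:
  assumes alg: "matching_alg alg" and sym: "\<And>x y. G x y = G y x"
    and Cr: "Cr \<subseteq> {..<n}" "card Cr \<le> t"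
    and clique: "\<And>x y. x < n \<Longrightarrow> y < n \<Longrightarrow> x \<noteq> y \<Longrightarrow> x \<notin> Cr \<Longrightarrow> y \<notin> Cr \<Longrightarrow> G x y"
  obtains C D where "star n t alg G = Some (C, D)" "n - 2 * t \<le> card (C - Cr)"
proof -
  interpret max_matching n "complement n G" "alg n (complement n G)"
    by (rule max_matching_complement[OF alg sym])
  let ?M = "alg n (complement n G)"
  let ?C = "star_C n (complement n G) ?M" and ?D = "star_D n (complement n G) ?M"
  have "finite Cr" using Cr(1) finite_subset by blast
  have "card ?M \<le> card Cr"
    using clique \<open>finite Cr\<close> by (intro card_le_card_vertex_cover) (auto simp: complement_def)
  moreover have "card (({..<n} - Cr) - ?C) \<le> card ?M"
    using clique by (intro card_outside_star_C_le) (auto simp: complement_def)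
  moreover have "card ({..<n} - Cr) = n - card Cr"
    using Cr \<open>finite Cr\<close> by (simp add: card_Diff_subset)
  moreover have "card (({..<n} - Cr) - ?C) = card ({..<n} - Cr) - card (?C - Cr)"
  proof -
    have "({..<n} - Cr) \<inter> ?C = ?C - Cr" using star_C_subset by auto
    moreover have "finite (?C - Cr)" using star_C_subset finite_subset by blast
    ultimately show ?thesis using card_Diff_subset_Int[of "{..<n} - Cr" ?C] by simp
  qed
  moreover have "card (?C - Cr) \<le> card ({..<n} - Cr)"
    using star_C_subset by (intro card_mono) auto
  ultimately have C: "n - 2 * t \<le> card (?C - Cr)" using Cr(2) by linarith
  moreover have "card (?C - Cr) \<le> card ?C"
    using star_C_subset by (intro card_mono) (auto intro: finite_subset)
  moreover have "n - t \<le> card ?D" using card_star_D_ge \<open>card ?M \<le> card Cr\<close> Cr(2) by linarith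
  ultimately have "star n t alg G = Some (?C, ?D)" by (simp add: star_altdef Let_def)
  with C show ?thesis using that by blast
qed

lemma exists_outside_if_few_inside:
  assumes "finite B" "card (S \<inter> (A \<union> B)) \<le> card B" "A \<inter> B = {}" "a \<in> A \<inter> S" "finite A"
  obtains b where "b \<in> B - S"
proof -
  have "card (S \<inter> (A \<union> B)) = card (A \<inter> S) + card (B \<inter> S)"
    using assms by (subst card_Un_disjoint[symmetric]) (auto intro!: arg_cong[where f = card])
  moreover have "card (A \<inter> S) > 0" using assms by (auto simp: card_gt_0_iff)
  ultimately have "card (B \<inter> S) < card B" using assms(2) by linarith
  hence "\<not> B \<subseteq> S" by (metis Int_absorb2 less_irrefl)
  thus ?thesis using that by blast
qed

lemma exists_cross_pair:
  assumes "finite A" "finite B" "A \<inter> B = {}" "card (S \<inter> (A \<union> B)) \<le> Suc k"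
    "Suc k \<le> card A" "Suc k \<le> card B"
  obtains a b where "a \<in> A" "b \<in> B" "a \<notin> S \<or> b \<notin> S" "card (S \<inter> ((A - {a}) \<union> (B - {b}))) \<le> k"
proof (cases "S \<inter> (A \<union> B) = {}")
  case True
  obtain a b where ab: "a \<in> A" "b \<in> B" using assms(5,6) by fastforce
  moreover have "S \<inter> ((A - {a}) \<union> (B - {b})) = {}" using True by blast
  ultimately show ?thesis using True by (intro that[OF ab]) auto
next
  case False
  then obtain a b where ab: "a \<in> A" "b \<in> B" "a \<notin> S \<or> b \<notin> S" "a \<in> S \<or> b \<in> S"
  proof (cases "A \<inter> S = {}")
    case True
    then obtain b where "b \<in> B \<inter> S" using False by blast
    moreover obtain a where "a \<in> A - S"
      using exists_outside_if_few_inside[of A S B b] assms \<open>b \<in> B \<inter> S\<close> by (auto simp: Un_commute Int_commute)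
    ultimately show ?thesis using that by blast
  next
    case False
    then obtain a where "a \<in> A \<inter> S" by blast
    moreover obtain b where "b \<in> B - S"
      using exists_outside_if_few_inside[of B S A a] assms \<open>a \<in> A \<inter> S\<close> by auto
    ultimately show ?thesis using that by blast
  qed
  have "S \<inter> ((A - {a}) \<union> (B - {b})) = (S \<inter> (A \<union> B)) - {a, b}" using assms(3) ab by auto
  moreover have "card ((S \<inter> (A \<union> B)) - {a, b}) < card (S \<inter> (A \<union> B))"
    using ab assms(1,2) by (intro psubset_card_mono) auto
  ultimately show ?thesis using assms(4) by (intro that[OF ab(1-3)]) simp
qed

lemma exists_cross_matching_avoiding:
  assumes "finite A" "finite B" "A \<inter> B = {}" "card (S \<inter> (A \<union> B)) \<le> k" "k \<le> card A" "k \<le> card B"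
  shows "\<exists>M \<subseteq> A \<times> B. card M = k \<and> (\<forall>(a, b)\<in>M. a \<notin> S \<or> b \<notin> S) \<and>
           (\<forall>e\<in>M. \<forall>e'\<in>M. e \<noteq> e' \<longrightarrow> {fst e, snd e} \<inter> {fst e', snd e'} = {})"
  using assms
proof (induction k arbitrary: A B)
  case 0 thus ?case by auto
next
  case (Suc k)
  obtain a b where ab: "a \<in> A" "b \<in> B" "a \<notin> S \<or> b \<notin> S"
    and small: "card (S \<inter> ((A - {a}) \<union> (B - {b}))) \<le> k"
    by (rule exists_cross_pair[OF Suc.prems])
  have "\<exists>M \<subseteq> (A - {a}) \<times> (B - {b}). card M = k \<and> (\<forall>(a, b)\<in>M. a \<notin> S \<or> b \<notin> S) \<and>
           (\<forall>e\<in>M. \<forall>e'\<in>M. e \<noteq> e' \<longrightarrow> {fst e, snd e} \<inter> {fst e', snd e'} = {})"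
    by (rule Suc.IH) (use Suc.prems small ab in auto)
  then obtain M where M: "M \<subseteq> (A - {a}) \<times> (B - {b})" "card M = k" "\<forall>(a, b)\<in>M. a \<notin> S \<or> b \<notin> S"
    "\<forall>e\<in>M. \<forall>e'\<in>M. e \<noteq> e' \<longrightarrow> {fst e, snd e} \<inter> {fst e', snd e'} = {}"
    by blast
  have "finite M" using M(1) Suc.prems(1,2) finite_subset by blast
  have "(a, b) \<notin> M" using M(1) by auto
  show ?case
  proof (intro exI[of _ "insert (a, b) M"] conjI)
    show "insert (a, b) M \<subseteq> A \<times> B" using M(1) ab by auto
    show "card (insert (a, b) M) = Suc k" using M(2) \<open>finite M\<close> \<open>(a, b) \<notin> M\<close> by simp
    show "\<forall>(a, b)\<in>insert (a, b) M. a \<notin> S \<or> b \<notin> S" using M(3) ab by auto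
    have "{a, b} \<inter> {fst e, snd e} = {}" if "e \<in> M" for e
    proof -
      have "fst e \<in> A - {a}" "snd e \<in> B - {b}" using that M(1) by auto
      thus ?thesis using Suc.prems(3) ab by auto
    qed
    thus "\<forall>e\<in>insert (a, b) M. \<forall>e'\<in>insert (a, b) M. e \<noteq> e' \<longrightarrow> {fst e, snd e} \<inter> {fst e', snd e'} = {}"
      using M(4) by (simp add: Int_commute) (metis (no_types))
  qed
qed

section \<open>Executions of the protocol\<close>

lemma graph_sym: "graph n l m Cr A i x y = graph n l m Cr A i y x"
  by (auto simp: graph_def)

lemma graph_honest_iff:
  assumes "x \<notin> Cr" "y \<notin> Cr" "x < n" "y < n" "x \<noteq> y"
  shows "graph n l m Cr A i x y \<longleftrightarrow> share n l m x y = share n l m y y \<and> share n l m x x = share n l m y x"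
  using assms by (auto simp: graph_def recv2_def vec_def recv1_def)

lemma share_eq_if_msg_blocks_eq:
  "msg_blocks n l (m j) = msg_blocks n l (m k) \<Longrightarrow> share n l m j = share n l m k"
  by (simp add: share_def fun_eq_iff)

lemma msg_blocks_eq_if_shares_agree:
  assumes "K \<subseteq> {..<n}" "tB n < card K" "\<And>z. z \<in> K \<Longrightarrow> share n l m j z = share n l m k z"
  shows "msg_blocks n l (m j) = msg_blocks n l (m k)"
  using assms prime_of_spec(1,2) msg_blocks_less_prime_of
  by (intro rs_enc_eq_on_imp_eq[where p = "prime_of n l" and n = n and K = K]) (auto simp: share_def)

definition closed_nbhd_in :: "(nat \<Rightarrow> nat \<Rightarrow> bool) \<Rightarrow> nat set \<Rightarrow> nat \<Rightarrow> nat set" where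
  "closed_nbhd_in G X x = {y\<in>X. y = x \<or> G x y}"

text \<open>The sets F_i and E_i of step 4 are attached n G_i C_i (t + 1) and attached n G_i F_i (2t + 1).\<close>
definition attached :: "nat \<Rightarrow> (nat \<Rightarrow> nat \<Rightarrow> bool) \<Rightarrow> nat set \<Rightarrow> nat \<Rightarrow> nat set" where
  "attached n G X k = {x. x < n \<and> k \<le> card (closed_nbhd_in G X x)}"

lemma Eset_nonemptyE:
  assumes "Eset n l alg m Cr A i \<noteq> {}"
  obtains C D where "star n (tB n) alg (graph n l m Cr A i) = Some (C, D)"
    "Eset n l alg m Cr A i = attached n (graph n l m Cr A i)
       (attached n (graph n l m Cr A i) C (tB n + 1)) (2 * tB n + 1)"
    "2 * tB n + 1 \<le> card (Eset n l alg m Cr A i)"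
  using assms unfolding Eset_def attached_def closed_nbhd_in_def Let_def
  by (auto split: option.splits if_splits)

lemma Eset_eqI:
  assumes "star n (tB n) alg (graph n l m Cr A i) = Some (C, D)"
    and "2 * tB n + 1 \<le> card (attached n (graph n l m Cr A i) C (tB n + 1))"
    and "2 * tB n + 1 \<le> card (attached n (graph n l m Cr A i)
           (attached n (graph n l m Cr A i) C (tB n + 1)) (2 * tB n + 1))"
  shows "Eset n l alg m Cr A i = attached n (graph n l m Cr A i)
           (attached n (graph n l m Cr A i) C (tB n + 1)) (2 * tB n + 1)"
  using assms unfolding Eset_def attached_def closed_nbhd_in_def Let_def by simp

lemma Eset_subset: "Eset n l alg m Cr A i \<subseteq> {..<n}"
proof (cases "Eset n l alg m Cr A i = {}")
  case False
  then obtain C D :: "nat set" where "Eset n l alg m Cr A i = attached n (graph n l m Cr A i)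
       (attached n (graph n l m Cr A i) C (tB n + 1)) (2 * tB n + 1)"
    by (rule Eset_nonemptyE)
  thus ?thesis by (auto simp: attached_def)
qed simp

lemma strict_majority_unique:
  assumes "finite X" "(card X + 2) div 2 \<le> card {j\<in>X. f j = v}" "(card X + 2) div 2 \<le> card {j\<in>X. f j = w}"
  shows "v = w"
proof (rule ccontr)
  assume "v \<noteq> w"
  hence "card {j\<in>X. f j = v} + card {j\<in>X. f j = w} = card ({j\<in>X. f j = v} \<union> {j\<in>X. f j = w})"
    using assms(1) by (intro card_Un_disjoint[symmetric]) auto
  also have "\<dots> \<le> card X" using assms(1) by (intro card_mono) auto
  finally show False using assms(2,3) by linarith
qed

locale execution =
  fixes n l :: nat and alg :: malg and m :: "nat \<Rightarrow> bool list" and Cr :: "nat set" and A :: adv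
  assumes n_pos: "1 \<le> n" and alg: "matching_alg alg"
    and Cr_subset: "Cr \<subseteq> {..<n}" and card_Cr: "card Cr \<le> tB n"
begin

abbreviation "data j \<equiv> msg_blocks n l (m j)"
abbreviation "G i \<equiv> graph n l m Cr A i"
abbreviation "E i \<equiv> Eset n l alg m Cr A i"

lemma finite_Cr: "finite Cr"
  using Cr_subset finite_subset by blast

lemma card_Diff_Cr: "card X - tB n \<le> card (X - Cr)"
  using diff_card_le_card_Diff[OF finite_Cr, of X] card_Cr by linarith

lemma card_honest: "n - tB n \<le> card ({..<n} - Cr)"
  using card_Diff_Cr[of "{..<n}"] by simp

lemma obtain_honest:
  assumes "tB n < card X" obtains x where "x \<in> X" "x \<notin> Cr"
proof -
  have "card (X - Cr) \<noteq> 0" using card_Diff_Cr[of X] assms by linarith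
  hence "X - Cr \<noteq> {}" by (metis card.empty)
  thus ?thesis using that by blast
qed

lemma card_honest_Eset:
  assumes "E x \<noteq> {}" shows "tB n + 1 \<le> card (E x - Cr)"
proof -
  obtain C D :: "nat set" where "2 * tB n + 1 \<le> card (E x)" using assms by (rule Eset_nonemptyE)
  thus ?thesis using card_Diff_Cr[of "E x"] by linarith
qed

lemma share_star_C:
  assumes "star n (tB n) alg (G x) = Some (C, D)" "c \<in> C - Cr" "d \<in> D - Cr"
  shows "share n l m c d = share n l m d d"
proof (cases "c = d")
  case False
  have "G x c d" using star_SomeD(5)[OF alg graph_sym assms(1)] assms(2,3) False by blast
  moreover have "d < n" "c < n" using star_SomeD(1,2)[OF alg graph_sym assms(1)] assms(2,3) by auto
  ultimately show ?thesis using graph_honest_iff assms(2,3) False by blast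
qed simp

lemma data_star_C_eq:
  assumes star: "star n (tB n) alg (G x) = Some (C, D)" and "a \<in> C - Cr" "a' \<in> C - Cr"
  shows "data a = data a'"
proof (rule msg_blocks_eq_if_shares_agree)
  show "D - Cr \<subseteq> {..<n}" using star_SomeD(2)[OF alg graph_sym star] by auto
  show "tB n < card (D - Cr)"
    using star_SomeD(4)[OF alg graph_sym star] card_Diff_Cr[of D] three_tB_lt[OF n_pos] by linarith
  show "share n l m a z = share n l m a' z" if "z \<in> D - Cr" for z
    using share_star_C[OF star] assms(2,3) that by simp
qed

lemma attached_star_C_witness:
  assumes star: "star n (tB n) alg (G x) = Some (C, D)"
    and f: "f \<in> attached n (G x) C (tB n + 1) - Cr"
  obtains a where "a \<in> C - Cr" "share n l m f f = share n l m a f"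
proof -
  have "tB n < card (closed_nbhd_in (G x) C f)" using f by (simp add: attached_def)
  then obtain y where y: "y \<in> closed_nbhd_in (G x) C f" "y \<notin> Cr" by (rule obtain_honest)
  have "share n l m f f = share n l m y f"
  proof (cases "y = f")
    case False
    hence "G x f y" using y by (simp add: closed_nbhd_in_def)
    thus ?thesis using graph_honest_iff[of f Cr y n] f y False by (auto simp: graph_def)
  qed simp
  thus ?thesis using that y by (auto simp: closed_nbhd_in_def)
qed

lemma data_attached_eq:
  assumes star: "star n (tB n) alg (G x) = Some (C, D)"
    and e: "e \<in> attached n (G x) (attached n (G x) C (tB n + 1)) (2 * tB n + 1) - Cr"
    and a: "a \<in> C - Cr"
  shows "data e = data a"
proof (rule msg_blocks_eq_if_shares_agree)
  let ?F = "attached n (G x) C (tB n + 1)"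
  let ?K = "closed_nbhd_in (G x) ?F e - Cr"
  show "?K \<subseteq> {..<n}" by (auto simp: closed_nbhd_in_def attached_def)
  have "2 * tB n + 1 \<le> card (closed_nbhd_in (G x) ?F e)"
    using e unfolding attached_def[of n "G x" ?F] by simp
  thus "tB n < card ?K" using card_Diff_Cr[of "closed_nbhd_in (G x) ?F e"] by linarith
  show "share n l m e y = share n l m a y" if y: "y \<in> ?K" for y
  proof -
    have "share n l m e y = share n l m y y"
    proof (cases "y = e")
      case False
      hence "G x e y" using y by (simp add: closed_nbhd_in_def)
      thus ?thesis using graph_honest_iff[of e Cr y n] e y False by (auto simp: graph_def)
    qed simp
    moreover obtain a' where "a' \<in> C - Cr" "share n l m y y = share n l m a' y"
      using attached_star_C_witness[OF star] y by (auto simp: closed_nbhd_in_def)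
    moreover have "share n l m a' = share n l m a"
      using data_star_C_eq[OF star \<open>a' \<in> C - Cr\<close> a] by (rule share_eq_if_msg_blocks_eq)
    ultimately show ?thesis by simp
  qed
qed

lemma data_Eset_eq:
  assumes "E x \<noteq> {}" "e \<in> E x - Cr" "e' \<in> E x - Cr"
  shows "data e = data e'"
proof -
  obtain C D where star: "star n (tB n) alg (G x) = Some (C, D)"
    and E: "E x = attached n (G x) (attached n (G x) C (tB n + 1)) (2 * tB n + 1)"
    using assms(1) by (rule Eset_nonemptyE)
  let ?F = "attached n (G x) C (tB n + 1)"
  have "tB n < card (closed_nbhd_in (G x) ?F e)"
    using assms(2) unfolding E attached_def[of n "G x" ?F] by simp
  then obtain y where "y \<in> ?F - Cr" by (auto simp: closed_nbhd_in_def elim: obtain_honest)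
  then obtain a where "a \<in> C - Cr" by (rule attached_star_C_witness[OF star])
  thus ?thesis using data_attached_eq[OF star] assms(2,3) E by metis
qed

lemma complement_matching_if_data_differ:
  assumes P: "P \<subseteq> {..<n} - Cr" "tB n < card P" "\<And>a. a \<in> P \<Longrightarrow> data a = data e"
    and Q: "Q \<subseteq> {..<n} - Cr" "tB n < card Q" "\<And>b. b \<in> Q \<Longrightarrow> data b = data e'"
    and ne: "data e \<noteq> data e'"
  obtains M where "is_matching n (complement n (G x)) M" "finite M" "card M = tB n + 1"
proof -
  define S where "S = {z. z < n \<and> share n l m e z = share n l m e' z}"
  have "card S \<le> tB n"
  proof (rule ccontr)
    assume "\<not> card S \<le> tB n"
    hence "data e = data e'" by (intro msg_blocks_eq_if_shares_agree[of S]) (auto simp: S_def)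
    thus False using ne by contradiction
  qed
  have disjoint: "P \<inter> Q = {}"
  proof (rule Int_emptyI)
    fix c assume "c \<in> P" "c \<in> Q"
    thus False using P(3) Q(3) ne by metis
  qed
  have "finite P" "finite Q" using P(1) Q(1) by (auto intro: finite_subset)
  moreover have "card (S \<inter> (P \<union> Q)) \<le> tB n + 1"
    using card_mono[of S "S \<inter> (P \<union> Q)"] \<open>card S \<le> tB n\<close> by (simp add: S_def)
  ultimately obtain M where M: "M \<subseteq> P \<times> Q" "card M = tB n + 1"
    "\<forall>(a, b)\<in>M. a \<notin> S \<or> b \<notin> S"
    "\<forall>e\<in>M. \<forall>e'\<in>M. e \<noteq> e' \<longrightarrow> {fst e, snd e} \<inter> {fst e', snd e'} = {}"
    using exists_cross_matching_avoiding[of P Q S "tB n + 1"] disjoint P(2) Q(2) by auto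
  have "\<not> G x a b" if "(a, b) \<in> M" for a b
  proof
    assume "G x a b"
    have ab: "a \<in> P" "b \<in> Q" "a \<noteq> b" using M(1) that disjoint by auto
    hence "share n l m a b = share n l m b b \<and> share n l m a a = share n l m b a"
      using \<open>G x a b\<close> graph_honest_iff[of a Cr b n] P(1) Q(1) by blast
    moreover have "share n l m a = share n l m e" "share n l m b = share n l m e'"
      using P(3) Q(3) ab by (auto intro: share_eq_if_msg_blocks_eq)
    ultimately have "a \<in> S" "b \<in> S" using ab P(1) Q(1) by (auto simp: S_def)
    thus False using M(3) that by auto
  qed
  hence "is_matching n (complement n (G x)) M"
    using M(1,4) P(1) Q(1) disjoint unfolding is_matching_def complement_def by fastforce
  moreover have "finite M" using M(1) \<open>finite P\<close> \<open>finite Q\<close> finite_subset by blast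
  ultimately show ?thesis using that M(2) by blast
qed

text \<open>Otherwise the honest parts of the two sets, whose codewords agree in at most t positions,
  would carry a matching of size t + 1 in the complement of the graph, and STAR would fail.\<close>
lemma data_Eset_cross_eq:
  assumes "E x \<noteq> {}" "E x' \<noteq> {}" "e \<in> E x - Cr" "e' \<in> E x' - Cr"
  shows "data e = data e'"
proof (rule ccontr)
  assume "data e \<noteq> data e'"
  moreover have "E x - Cr \<subseteq> {..<n} - Cr" "E x' - Cr \<subseteq> {..<n} - Cr" using Eset_subset by blast+
  moreover have "tB n < card (E x - Cr)" "tB n < card (E x' - Cr)"
    using card_honest_Eset assms(1,2) by (simp_all add: Suc_le_eq)
  moreover have "data a = data e" if "a \<in> E x - Cr" for a using data_Eset_eq assms(1,3) that by blast
  moreover have "data b = data e'" if "b \<in> E x' - Cr" for b using data_Eset_eq assms(2,4) that by blast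
  ultimately obtain M where "is_matching n (complement n (G x)) M" "finite M" "card M = tB n + 1"
    using complement_matching_if_data_differ[of "E x - Cr" e "E x' - Cr" e' x] by blast
  hence "star n (tB n) alg (G x) = None"
    using three_tB_lt[OF n_pos] by (intro star_eq_None_if_large_matching[OF alg graph_sym]) auto
  moreover obtain C D where "star n (tB n) alg (G x) = Some (C, D)" using assms(1) by (rule Eset_nonemptyE)
  ultimately show False by simp
qed

lemma honest_subset_attached:
  assumes clique: "\<And>a b. a < n \<Longrightarrow> b < n \<Longrightarrow> a \<noteq> b \<Longrightarrow> a \<notin> Cr \<Longrightarrow> b \<notin> Cr \<Longrightarrow> G x a b"
    and "X \<subseteq> {..<n}" "k \<le> card (X - Cr)"
  shows "{..<n} - Cr \<subseteq> attached n (G x) X k"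
proof
  fix h assume h: "h \<in> {..<n} - Cr"
  have "X - Cr \<subseteq> closed_nbhd_in (G x) X h" using clique h assms(2) by (auto simp: closed_nbhd_in_def)
  hence "card (X - Cr) \<le> card (closed_nbhd_in (G x) X h)"
    using assms(2) by (intro card_mono) (auto simp: closed_nbhd_in_def intro: finite_subset)
  thus "h \<in> attached n (G x) X k" using h assms(3) by (simp add: attached_def)
qed

lemma Eset_nonempty_if_unanimous:
  assumes unanimous: "\<And>i. i < n \<Longrightarrow> i \<notin> Cr \<Longrightarrow> m i = v"
  shows "E x \<noteq> {}"
proof -
  have clique: "G x a b" if "a < n" "b < n" "a \<noteq> b" "a \<notin> Cr" "b \<notin> Cr" for a b
    using that graph_honest_iff[of a Cr b n l m A x] unanimous[of a] unanimous[of b] by (simp add: share_def)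
  obtain C D where star: "star n (tB n) alg (G x) = Some (C, D)" and C: "n - 2 * tB n \<le> card (C - Cr)"
    by (rule star_eq_Some_if_honest_clique[where G = "G x", OF alg graph_sym Cr_subset card_Cr clique])
  let ?F = "attached n (G x) C (tB n + 1)"
  let ?E = "attached n (G x) ?F (2 * tB n + 1)"
  have "{..<n} - Cr \<subseteq> ?F"
    using star_SomeD(1,2)[OF alg graph_sym star] C three_tB_lt[OF n_pos]
    by (intro honest_subset_attached[OF clique]) auto
  moreover have "?F \<subseteq> {..<n}" by (auto simp: attached_def)
  moreover have "finite ?F" using \<open>?F \<subseteq> {..<n}\<close> finite_subset by blast
  ultimately have F: "card ({..<n} - Cr) \<le> card (?F - Cr)" by (intro card_mono) auto
  hence "{..<n} - Cr \<subseteq> ?E"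
    using \<open>?F \<subseteq> {..<n}\<close> card_honest three_tB_lt[OF n_pos]
    by (intro honest_subset_attached[OF clique]) auto
  hence "card ({..<n} - Cr) \<le> card ?E" by (intro card_mono) (auto simp: attached_def)
  moreover have "card (?F - Cr) \<le> card ?F" using \<open>?F \<subseteq> {..<n}\<close> by (intro card_mono) (auto intro: finite_subset)
  ultimately have "2 * tB n + 1 \<le> card ?F" "2 * tB n + 1 \<le> card ?E"
    using F card_honest three_tB_lt[OF n_pos] by linarith+
  hence "E x = ?E" by (rule Eset_eqI[OF star])
  thus ?thesis using \<open>2 * tB n + 1 \<le> card ?E\<close> by auto
qed

lemma proceed_common_data:
  assumes "proceed n l alg m Cr A"
  obtains e0 where "e0 < n" "e0 \<notin> Cr" "\<And>x e. E x \<noteq> {} \<Longrightarrow> e \<in> E x - Cr \<Longrightarrow> data e = data e0"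
proof -
  have "tB n < card {x. x < n \<and> bcast n l alg m Cr A x}" using assms by (simp add: proceed_def)
  then obtain x0 where "bcast n l alg m Cr A x0" "x0 \<notin> Cr" by (auto elim: obtain_honest)
  hence "E x0 \<noteq> {}" by (simp add: bcast_def)
  moreover from this have "0 < card (E x0 - Cr)" using card_honest_Eset[of x0] by linarith
  then obtain e0 where "e0 \<in> E x0 - Cr" by (metis card_gt_0_iff ex_in_conv)
  moreover have "e0 < n" using \<open>e0 \<in> E x0 - Cr\<close> Eset_subset by blast
  ultimately show ?thesis using that data_Eset_cross_eq by blast
qed

lemma majof_Eset:
  assumes "E x \<noteq> {}" and common: "\<And>e. e \<in> E x - Cr \<Longrightarrow> data e = d"
  shows "majof n l m Cr A i (E x) = Some (rs_enc (prime_of n l) d i)"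
proof -
  let ?w = "rs_enc (prime_of n l) d i"
  let ?votes = "\<lambda>v. {j\<in>E x. snd (recv1 n l m Cr A i j) = v}"
  have fin: "finite (E x)" by (rule finite_subset[OF Eset_subset]) simp
  have "E x - Cr \<subseteq> ?votes ?w"
  proof
    fix j assume j: "j \<in> E x - Cr"
    hence "snd (recv1 n l m Cr A i j) = share n l m j i" by (simp add: recv1_def)
    also have "\<dots> = ?w" using common[OF j] by (simp add: share_def)
    finally show "j \<in> ?votes ?w" using j by simp
  qed
  hence "card (E x - Cr) \<le> card (?votes ?w)" using fin by (intro card_mono) auto
  moreover obtain C D :: "nat set" where "2 * tB n + 1 \<le> card (E x)" using assms(1) by (rule Eset_nonemptyE)
  hence "(card (E x) + 2) div 2 \<le> card (E x) - tB n" by presburger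
  ultimately have w: "(card (E x) + 2) div 2 \<le> card (?votes ?w)" using card_Diff_Cr[of "E x"] by linarith
  have "(SOME v. (card (E x) + 2) div 2 \<le> card (?votes v)) = ?w"
    using w strict_majority_unique[OF fin _ w] by (rule some_equality)
  moreover have "\<exists>v. (card (E x) + 2) div 2 \<le> card (?votes v)" using w by blast
  ultimately show ?thesis unfolding majof_def by simp
qed

lemma majval_eq:
  assumes "proceed n l alg m Cr A" and common: "\<And>x e. E x \<noteq> {} \<Longrightarrow> e \<in> E x - Cr \<Longrightarrow> data e = d"
  shows "majval n l alg m Cr A j = rs_enc (prime_of n l) d j"
proof -
  let ?B = "{x. x < n \<and> bcast n l alg m Cr A x}"
  let ?P = "\<lambda>v. \<exists>E'. E' \<subseteq> ?B \<and> tB n + 1 \<le> card E' \<and>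
      (\<forall>x\<in>E'. majof n l m Cr A j (recvE n l alg m Cr A j x) = Some v)"
  have honest: "majof n l m Cr A j (recvE n l alg m Cr A j x) = Some (rs_enc (prime_of n l) d j)"
    if "x \<in> ?B - Cr" for x
    using that majof_Eset[of x d j] common[of x] by (simp add: recvE_def bcast_def)
  have "tB n + 1 \<le> card (?B - Cr)"
    using assms(1) card_Diff_Cr[of ?B] by (simp add: proceed_def)
  hence "?P (rs_enc (prime_of n l) d j)" using honest by (intro exI[of _ "?B - Cr"]) auto
  moreover have "v = rs_enc (prime_of n l) d j" if "?P v" for v
  proof -
    from that obtain E' where "E' \<subseteq> ?B" "tB n < card E'"
      and E': "\<forall>x\<in>E'. majof n l m Cr A j (recvE n l alg m Cr A j x) = Some v" by auto
    then obtain x where "x \<in> E'" "x \<notin> Cr" by (auto elim: obtain_honest)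
    hence "x \<in> ?B - Cr" using \<open>E' \<subseteq> ?B\<close> by blast
    thus ?thesis using E' honest[of x] \<open>x \<in> E'\<close> by simp
  qed
  ultimately show ?thesis unfolding majval_def by (rule some_equality)
qed

lemma party_output_eq:
  assumes "proceed n l alg m Cr A" "e0 \<notin> Cr"
    and common: "\<And>x e. E x \<noteq> {} \<Longrightarrow> e \<in> E x - Cr \<Longrightarrow> data e = data e0"
  shows "party_output n l alg m' m Cr A i = unblocks n l (data e0)"
proof -
  have "rs_dec n (tB n) (prime_of n l) (recv6 n l alg m Cr A i) = data e0"
  proof (rule rs_dec_unique_decoding[OF prime_of_spec(1,2) three_tB_lt[OF n_pos]])
    show "length (data e0) = tB n + 1" "\<forall>x\<in>set (data e0). x < prime_of n l"
      using msg_blocks_less_prime_of by auto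
    show "recv6 n l alg m Cr A i j = rs_enc (prime_of n l) (data e0) j" if "j \<notin> Cr" for j
      using that majval_eq[OF assms(1) common] by (simp add: recv6_def)
  qed (use finite_Cr card_Cr in auto)
  thus ?thesis using assms(1) by (simp add: party_output_def)
qed

theorem agreement:
  "party_output n l alg m' m Cr A i = party_output n l alg m' m Cr A j"
proof (cases "proceed n l alg m Cr A")
  case True
  then obtain e0 where "e0 < n" "e0 \<notin> Cr" "\<And>x e. E x \<noteq> {} \<Longrightarrow> e \<in> E x - Cr \<Longrightarrow> data e = data e0"
    by (rule proceed_common_data) auto
  thus ?thesis using party_output_eq[OF True, of e0] by simp
qed (simp add: party_output_def)

theorem validity:
  assumes unanimous: "\<And>i. i < n \<Longrightarrow> i \<notin> Cr \<Longrightarrow> m i = v" and "length v = l"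
  shows "party_output n l alg m' m Cr A i = v"
proof -
  have "{..<n} - Cr \<subseteq> {x. x < n \<and> bcast n l alg m Cr A x}"
    using Eset_nonempty_if_unanimous[OF unanimous] by (auto simp: bcast_def)
  hence "card ({..<n} - Cr) \<le> card {x. x < n \<and> bcast n l alg m Cr A x}" by (intro card_mono) auto
  hence pr: "proceed n l alg m Cr A"
    using card_honest three_tB_lt[OF n_pos] by (simp add: proceed_def)
  then obtain e0 where "e0 < n" and e0: "e0 \<notin> Cr" "\<And>x e. E x \<noteq> {} \<Longrightarrow> e \<in> E x - Cr \<Longrightarrow> data e = data e0"
    by (rule proceed_common_data) auto
  have "party_output n l alg m' m Cr A i = unblocks n l (data e0)" by (rule party_output_eq[OF pr e0])
  also have "data e0 = msg_blocks n l v" using unanimous[OF \<open>e0 < n\<close> e0(1)] by simp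
  finally show ?thesis using unblocks_msg_blocks[OF \<open>length v = l\<close>] by simp
qed

end

section \<open>Communication complexity\<close>

lemma n_mult_blk_le: assumes "1 \<le> n" shows "n * blk n l \<le> 3 * l + n"
proof -
  have "blk n l * (tB n + 1) \<le> l + tB n" unfolding blk_def by (rule div_times_less_eq_dividend)
  moreover have "n \<le> 3 * (tB n + 1)" "3 * tB n \<le> n" using assms unfolding tB_def by presburger+
  ultimately show ?thesis using mult_le_mono1[of n "3 * (tB n + 1)" "blk n l"] by (simp add: algebra_simps)
qed

lemma symbits_prime_of_le: "symbits (prime_of n l) \<le> 2 * blk n l + 2 * n + 3"
  unfolding symbits_def using prime_of_spec(4)[of n l] by (intro Least_le) (simp add: algebra_simps)

lemma comm_cost_le:
  "comm_cost n l alg m Cr A B1 \<le> n * (3 * symbits (prime_of n l) * n + 2 * n * n) + n * B1"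
proof -
  define k where "k = symbits (prime_of n l)"
  have "2 * k * (n - 1) + n * (n - 1) + (if Eset n l alg m Cr A i \<noteq> {} then n * (n - 1) else 0)
      + (if proceed n l alg m Cr A then k * (n - 1) else 0) \<le> 3 * k * n + 2 * n * n" for i
  proof -
    have "2 * k * (n - 1) = 2 * (k * (n - 1))" by simp
    moreover have "k * (n - 1) \<le> k * n" "n * (n - 1) \<le> n * n" by simp_all
    moreover have "(if Eset n l alg m Cr A i \<noteq> {} then n * (n - 1) else 0) \<le> n * (n - 1)"
      "(if proceed n l alg m Cr A then k * (n - 1) else 0) \<le> k * (n - 1)" by simp_all
    ultimately show ?thesis by linarith
  qed
  hence "(\<Sum>i\<in>{..<n} - Cr. 2 * k * (n - 1) + n * (n - 1)
      + (if Eset n l alg m Cr A i \<noteq> {} then n * (n - 1) else 0)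
      + (if proceed n l alg m Cr A then k * (n - 1) else 0))
    \<le> (\<Sum>i\<in>{..<n} - Cr. 3 * k * n + 2 * n * n)" by (intro sum_mono)
  also have "\<dots> = card ({..<n} - Cr) * (3 * k * n + 2 * n * n)" by simp
  also have "\<dots> \<le> n * (3 * k * n + 2 * n * n)"
    using card_mono[of "{..<n}" "{..<n} - Cr"] by (intro mult_le_mono1) auto
  finally show ?thesis unfolding comm_cost_def Let_def k_def by simp
qed

lemma comm_cost_bound:
  assumes "1 \<le> n" shows "comm_cost n l alg m Cr A B1 \<le> 23 * (n * l + n ^ 3 + n * B1)"
proof -
  let ?k = "symbits (prime_of n l)" and ?b = "blk n l"
  have "n * (3 * ?k * n) \<le> n * (3 * (2 * ?b + 2 * n + 3) * n)"
    using symbits_prime_of_le[of n l] by simp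
  also have "\<dots> = 6 * n * (n * ?b) + 6 * n * n * n + 9 * n * n" by (simp add: algebra_simps)
  also have "\<dots> \<le> 6 * n * (3 * l + n) + 6 * n * n * n + 9 * n * n"
    using n_mult_blk_le[OF assms, of l] by simp
  finally have "n * (3 * ?k * n) \<le> 18 * (n * l) + 15 * (n * n) + 6 * (n * n * n)"
    by (simp add: algebra_simps)
  moreover have "n * n \<le> n * n * n" using assms by simp
  moreover have "n * (3 * ?k * n + 2 * n * n) = n * (3 * ?k * n) + 2 * (n * n * n)"
    "23 * (n * l + n ^ 3 + n * B1) = 23 * (n * l) + 23 * (n * n * n) + 23 * (n * B1)"
    by (simp_all add: algebra_simps power3_eq_cube)
  ultimately have "n * (3 * ?k * n + 2 * n * n) + n * B1 \<le> 23 * (n * l + n ^ 3 + n * B1)"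
    by linarith
  thus ?thesis using comm_cost_le[of n l alg m Cr A B1] by linarith
qed

theorem mainTheorem10:
  shows "(\<forall>n l alg m' m Cr A.
            1 \<le> n \<and> matching_alg alg \<and> length m' = l \<and>
            Cr \<subseteq> {..<n} \<and> card Cr \<le> tB n \<and>
            (\<forall>i<n. i \<notin> Cr \<longrightarrow> length (m i) = l) \<longrightarrow>
              (\<forall>i<n. \<forall>j<n. i \<notin> Cr \<and> j \<notin> Cr \<longrightarrow>
                  party_output n l alg m' m Cr A i = party_output n l alg m' m Cr A j) \<and>
              (\<forall>v. (\<forall>i<n. i \<notin> Cr \<longrightarrow> m i = v) \<longrightarrow>
                  (\<forall>i<n. i \<notin> Cr \<longrightarrow> party_output n l alg m' m Cr A i = v)))
       \<and> (\<exists>C::nat. \<forall>n l alg m Cr A B1.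
            1 \<le> n \<and> matching_alg alg \<and>
            Cr \<subseteq> {..<n} \<and> card Cr \<le> tB n \<and>
            (\<forall>i<n. i \<notin> Cr \<longrightarrow> length (m i) = l) \<longrightarrow>
              comm_cost n l alg m Cr A B1 \<le> C * (n * l + n ^ 3 + n * B1))"
proof (intro conjI allI impI)
  fix n l i j :: nat and alg :: malg and m' :: "bool list" and m :: "nat \<Rightarrow> bool list" and Cr A
  assume "1 \<le> n \<and> matching_alg alg \<and> length m' = l \<and> Cr \<subseteq> {..<n} \<and> card Cr \<le> tB n \<and>
    (\<forall>i<n. i \<notin> Cr \<longrightarrow> length (m i) = l)"
  then interpret execution n l alg m Cr A by unfold_locales auto
  show "party_output n l alg m' m Cr A i = party_output n l alg m' m Cr A j" by (rule agreement)
next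
  fix n l i :: nat and alg :: malg and m' v :: "bool list" and m :: "nat \<Rightarrow> bool list" and Cr A
  assume H: "1 \<le> n \<and> matching_alg alg \<and> length m' = l \<and> Cr \<subseteq> {..<n} \<and> card Cr \<le> tB n \<and>
    (\<forall>i<n. i \<notin> Cr \<longrightarrow> length (m i) = l)"
    and unanimous: "\<forall>i<n. i \<notin> Cr \<longrightarrow> m i = v" and i: "i < n" "i \<notin> Cr"
  then interpret execution n l alg m Cr A by unfold_locales auto
  show "party_output n l alg m' m Cr A i = v"
    using validity[of v] unanimous H i by auto
next
  show "\<exists>C::nat. \<forall>n l alg m Cr A B1. 1 \<le> n \<and> matching_alg alg \<and> Cr \<subseteq> {..<n} \<and> card Cr \<le> tB n \<and>
      (\<forall>i<n. i \<notin> Cr \<longrightarrow> length (m i) = l) \<longrightarrow>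
        comm_cost n l alg m Cr A B1 \<le> C * (n * l + n ^ 3 + n * B1)"
    using comm_cost_bound by blast
qed

end
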